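(* Let $n\ge2$, $0<\rho<\sigma<\infty$ and $v\in L^1(B_\sigma)$. Define $$J(\rho,\sigma,v):=\inf\Big\{\int_{B_\sigma}|v||\nabla\eta|^2\,dx\;:\;\eta\in C^1_0(B_\sigma),\ \eta\ge0,\ \eta=1\text{ in }B_\rho\Big\}.$$ Then for every $\delta\in(0,1]$, $$J(\rho,\sigma,v)\le(\sigma-\rho)^{-(1+\frac1\delta)}\Big(\int_\rho^\sigma\Big(\int_{S_r}|v|\Big)^\delta dr\Big)^{\frac1\delta}.$$
   Context: $B_r$ denotes the open ball of radius $r$ centered at the origin in $\mathbb R^n$, $S_r=\partial B_r$ the sphere of radius $r$ centered at the origin, and $\int_{S_r}|v|$ denotes the integral of $|v|$ over $S_r$ with respect to the $(n-1)$-dimensional surface measure (defined for a.e. $r$). *)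

theory Defs
  imports "HOL-Analysis.Analysis"
begin

definition C1_0 :: "'a::euclidean_space set \<Rightarrow> ('a \<Rightarrow> real) set" where
  "C1_0 B = {\<eta>. (\<exists>g. (\<forall>x. (\<eta> has_derivative (\<lambda>h. g x \<bullet> h)) (at x)) \<and> continuous_on UNIV g)
               \<and> compact (closure {x. \<eta> x \<noteq> 0}) \<and> closure {x. \<eta> x \<noteq> 0} \<subseteq> B}"

definition grad :: "('a::euclidean_space \<Rightarrow> real) \<Rightarrow> 'a \<Rightarrow> 'a" where
  "grad \<eta> x = (SOME g. (\<eta> has_derivative (\<lambda>h. g \<bullet> h)) (at x))"

definition J :: "real \<Rightarrow> real \<Rightarrow> ('a::euclidean_space \<Rightarrow> real) \<Rightarrow> real" where
  "J \<rho> \<sigma> v = Inf {(\<integral>x\<in>ball 0 \<sigma>. \<bar>v x\<bar> * (norm (grad \<eta> x))\<^sup>2 \<partial>lebesgue) | \<eta>.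
        \<eta> \<in> C1_0 (ball 0 \<sigma>) \<and> (\<forall>x. \<eta> x \<ge> 0) \<and> (\<forall>x\<in>ball 0 \<rho>. \<eta> x = 1)}"

text \<open>Integral of |v| over the sphere S_r w.r.t. the (n-1)-dimensional surface measure,
  using the cone (polar-coordinate) description of the surface measure:
  int_{S_r} g = r^(n-1) int_{S^(n-1)} g(r w) dw = (n/r) int_{B_r} g(r x/|x|) dx.\<close>
definition sphere_int_abs :: "('a::euclidean_space \<Rightarrow> real) \<Rightarrow> real \<Rightarrow> real" where
  "sphere_int_abs v r =
     (real DIM('a) / r) * (\<integral>x\<in>ball 0 r. \<bar>v ((r / norm x) *\<^sub>R x)\<bar> \<partial>lebesgue)"

end

theory Submission
  imports Defs
begin

text \<open>
  For a radial test function \<open>\<eta>(x) = \<phi>(|x|)\<close> whose profile falls from 1 to 0 with slope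
  \<open>-k / \<integral>k\<close>, the polar-coordinate identity \<open>\<integral>\<^sub>B |v| \<psi>(|x|) dx = \<integral> \<psi>(r) S(r) dr\<close>, where \<open>S(r)\<close>
  is the integral of \<open>|v|\<close> over the sphere of radius \<open>r\<close>, turns the energy of \<open>\<eta>\<close> into the
  one-dimensional quotient \<open>\<integral>k\<^sup>2 S / (\<integral>k)\<^sup>2\<close>.  Hence \<open>J\<close> is bounded by this quotient for every
  continuous bump \<open>k\<close> compactly supported in \<open>(\<rho>, \<sigma>)\<close>.

  The quotient is formally minimal for \<open>k = 1/S\<close>.  Continuous bumps converging almost everywhere to
  \<open>1/(S + \<eta>)\<close> (difference quotients of \<open>\<integral>S\<close> by Lebesgue's differentiation theorem, cut off near
  the end points) and dominated convergence give \<open>J \<le> 1 / \<integral>(S + \<eta>)\<^sup>-\<^sup>1\<close>.  Hoelder's inequality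
  in the form \<open>(\<sigma> - \<rho>)\<^bsup>1+1/\<delta>\<^esup> \<le> (\<integral>u\<^sup>\<delta>)\<^bsup>1/\<delta>\<^esup> \<integral>u\<^sup>-\<^sup>1\<close>, proved by integrating a one-parameter
  family of Young inequalities and optimising the parameter, together with
  \<open>(S + \<eta>)\<^sup>\<delta> \<le> S\<^sup>\<delta> + \<eta>\<^sup>\<delta>\<close>, bounds this by the claimed right-hand side up to a term that vanishes as
  \<open>\<eta> \<rightarrow> 0\<close>.

  The polar-coordinate identity is proved for the cone description of the surface measure used in
  the definition of \<open>sphere_int_abs\<close>: Fubini's theorem together with the scaling behaviour of
  \<open>dr/r\<close> and of Lebesgue measure reduces it to \<open>\<integral>\<^sub>1\<^sup>\<infinity> n t\<^bsup>-n-1\<^esup> dt = 1\<close>.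
\<close>

section \<open>Elementary inequalities\<close>

lemma Young_powr_inverse:
  fixes u l d :: real
  assumes "0 < u" "0 < l" "0 < d"
  shows "1 + d \<le> l * u powr d + d * l powr (-1/d) / u"
proof -
  define a b where "a = (l * u powr d) powr (1/(1+d))" and "b = (l * u powr d) powr (-1/(1+d))"
  have p: "1 + d > 1" "(1+d)/d > 1" "1/(1+d) + 1/((1+d)/d) = 1"
    using assms by (auto simp: field_simps)
  have lu: "l * u powr d > 0" using assms by simp
  have ab: "a * b = 1" unfolding a_def b_def using lu assms by (simp add: powr_add[symmetric])
  have ap: "a powr (1+d) = l * u powr d" unfolding a_def using lu assms by (simp add: powr_powr)
  have bq: "b powr ((1+d)/d) = l powr (-1/d) / u"
  proof -
    have "b powr ((1+d)/d) = (l * u powr d) powr (-1/d)"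
      unfolding b_def using lu assms by (simp add: powr_powr)
    also have "\<dots> = l powr (-1/d) * u powr (-1)" using assms by (simp add: powr_mult powr_powr)
    finally show ?thesis using assms by (simp add: powr_minus_divide)
  qed
  have "a * b \<le> a powr (1+d) / (1+d) + b powr ((1+d)/d) / ((1+d)/d)"
    by (rule Youngs_inequality[OF p]) (auto simp: a_def b_def)
  then have "1 \<le> l * u powr d / (1+d) + (l powr (-1/d) / u) / ((1+d)/d)"
    unfolding ab ap bq .
  also have "\<dots> = (l * u powr d + d * (l powr (-1/d) / u)) / (1 + d)"
    by (simp only: divide_divide_eq_right add_divide_distrib[of _ _ "1 + d"] mult.commute)
  finally show ?thesis using assms by (simp add: le_divide_eq)
qed

lemma powr_le_of_Young_bounds:
  fixes A B L d :: real
  assumes "0 < A" "0 < B" "0 \<le> L" "0 < d"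
    and bound: "\<And>l. 0 < l \<Longrightarrow> (1 + d) * L \<le> l * A + d * l powr (-1/d) * B"
  shows "L powr (1 + 1/d) \<le> A powr (1/d) * B"
proof -
  define a b where "a = ln A" and "b = ln B"
  have A: "A = exp a" and B: "B = exp b" using assms by (auto simp: a_def b_def)
  define P where "P = exp ((a + d * b) / (1 + d))"
  \<comment> \<open>the minimiser \<open>l = (B/A) powr (d/(1+d))\<close> balances both terms at \<open>P\<close>\<close>
  define l where "l = exp (d / (1 + d) * (b - a))"
  have "d + d * d \<noteq> 0" using \<open>0 < d\<close> by (smt (verit) mult_pos_pos)
  then have lA: "l * A = P" and lB: "l powr (-1/d) * B = P"
    using \<open>0 < d\<close> by (simp_all add: l_def P_def A B powr_def exp_add[symmetric] field_simps)
  have "(1 + d) * L \<le> l * A + d * (l powr (-1/d) * B)"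
    using bound[of l] by (simp add: l_def mult.assoc)
  also have "\<dots> = (1 + d) * P" unfolding lA lB by (simp add: algebra_simps)
  finally have "L \<le> P" using \<open>0 < d\<close> by simp
  then have "L powr (1 + 1/d) \<le> P powr (1 + 1/d)"
    using assms by (intro powr_mono2) auto
  also have "\<dots> = A powr (1/d) * B"
    using \<open>0 < d\<close> \<open>d + d * d \<noteq> 0\<close> by (simp add: P_def A B powr_def exp_add[symmetric] field_simps)
  finally show ?thesis .
qed

lemma set_integral_pos_Icc:
  fixes f :: "real \<Rightarrow> real"
  assumes "\<rho> < \<sigma>" "\<And>x. x \<in> {\<rho>..\<sigma>} \<Longrightarrow> 0 < f x" "set_integrable lborel {\<rho>..\<sigma>} f"
  shows "0 < (LINT x:{\<rho>..\<sigma>}|lborel. f x)"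
proof -
  have "0 \<le> (LINT x:{\<rho>..\<sigma>}|lborel. f x)"
    using assms unfolding set_lebesgue_integral_def
    by (intro integral_nonneg_AE) (auto simp: indicator_def less_imp_le)
  moreover have "(LINT x:{\<rho>..\<sigma>}|lborel. f x) \<noteq> 0"
  proof
    assume "(LINT x:{\<rho>..\<sigma>}|lborel. f x) = 0"
    then have "AE x in lborel. indicator {\<rho>..\<sigma>} x * f x = 0"
      using assms integral_nonneg_eq_0_iff_AE[of lborel "\<lambda>x. indicator {\<rho>..\<sigma>} x * f x"]
      unfolding set_lebesgue_integral_def set_integrable_def by (auto simp: indicator_def less_imp_le)
    then have "AE x in lborel. x \<notin> {\<rho>..\<sigma>}"
      by eventually_elim (use assms in \<open>force simp: indicator_def\<close>)
    then have "{\<rho>..\<sigma>} \<in> null_sets lborel" by (subst AE_iff_null_sets) auto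
    then show False using assms by auto
  qed
  ultimately show ?thesis by linarith
qed

lemma reverse_Holder_Icc:
  fixes u :: "real \<Rightarrow> real"
  assumes "\<rho> < \<sigma>" "0 < d" and pos: "\<And>x. x \<in> {\<rho>..\<sigma>} \<Longrightarrow> 0 < u x"
    and int_pow: "set_integrable lborel {\<rho>..\<sigma>} (\<lambda>x. u x powr d)"
    and int_inv: "set_integrable lborel {\<rho>..\<sigma>} (\<lambda>x. 1 / u x)"
  shows "(\<sigma> - \<rho>) powr (1 + 1/d)
           \<le> (LINT x:{\<rho>..\<sigma>}|lborel. u x powr d) powr (1/d) * (LINT x:{\<rho>..\<sigma>}|lborel. 1 / u x)"
proof (rule powr_le_of_Young_bounds)
  show "0 < (LINT x:{\<rho>..\<sigma>}|lborel. u x powr d)"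
    using pos by (intro set_integral_pos_Icc[OF \<open>\<rho> < \<sigma>\<close> _ int_pow]) (simp add: less_imp_neq[symmetric])
  show "0 < (LINT x:{\<rho>..\<sigma>}|lborel. 1 / u x)"
    using pos by (intro set_integral_pos_Icc[OF \<open>\<rho> < \<sigma>\<close> _ int_inv]) simp
  fix l :: real assume "0 < l"
  have int_l: "set_integrable lborel {\<rho>..\<sigma>} (\<lambda>x. l * u x powr d)"
    and int_d: "set_integrable lborel {\<rho>..\<sigma>} (\<lambda>x. d * l powr (-1/d) * (1 / u x))"
    using int_pow int_inv by (simp_all only: set_integrable_mult_right)
  have "(1 + d) * (\<sigma> - \<rho>) = (LINT x:{\<rho>..\<sigma>}|lborel. 1 + d)"
    using assms by (simp add: set_integral_const measure_lborel_Icc)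
  also have "\<dots> \<le> (LINT x:{\<rho>..\<sigma>}|lborel. l * u x powr d + d * l powr (-1/d) * (1 / u x))"
  proof (rule set_integral_mono)
    show "set_integrable lborel {\<rho>..\<sigma>} (\<lambda>x. 1 + d)"
      using assms by (simp add: set_integrable_def integrable_indicator_iff emeasure_lborel_Icc)
    show "set_integrable lborel {\<rho>..\<sigma>} (\<lambda>x. l * u x powr d + d * l powr (-1/d) * (1 / u x))"
      using int_l int_d by (rule set_integral_add)
    show "1 + d \<le> l * u x powr d + d * l powr (-1/d) * (1 / u x)" if "x \<in> {\<rho>..\<sigma>}" for x
      using Young_powr_inverse[of "u x" l d] pos[OF that] \<open>0 < l\<close> \<open>0 < d\<close> by simp
  qed
  also have "\<dots> = l * (LINT x:{\<rho>..\<sigma>}|lborel. u x powr d) + d * l powr (-1/d) * (LINT x:{\<rho>..\<sigma>}|lborel. 1 / u x)"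
    by (simp only: set_integral_add(2)[OF int_l int_d] set_integral_mult_right)
  finally show "(1 + d) * (\<sigma> - \<rho>) \<le> \<dots>" .
qed (use assms in auto)

lemma powr_add_le_add_powr:
  fixes x y d :: real
  assumes "0 \<le> x" "0 \<le> y" "0 < d" "d \<le> 1"
  shows "(x + y) powr d \<le> x powr d + y powr d"
proof (cases "x + y = 0")
  case False
  define s where "s = x + y"
  have s: "0 < s" using False assms by (simp add: s_def)
  have "x / s \<le> (x / s) powr d" "y / s \<le> (y / s) powr d"
    using powr_mono'[of d 1 "x/s"] powr_mono'[of d 1 "y/s"] assms s by (simp_all add: s_def)
  then have "s powr d * (x / s + y / s) \<le> s powr d * ((x/s) powr d + (y/s) powr d)"
    by (intro mult_left_mono) auto
  also have "\<dots> = x powr d + y powr d"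
    using s assms by (simp add: powr_divide distrib_left)
  also have "x / s + y / s = 1" using s by (simp add: s_def add_divide_distrib[symmetric])
  finally show ?thesis by (simp add: s_def)
qed (use assms in simp)

lemma powr_le_one_plus:
  fixes x d :: real
  assumes "0 \<le> x" "0 < d" "d \<le> 1"
  shows "x powr d \<le> 1 + x"
proof (cases "x \<le> 1")
  case True
  then have "x powr d \<le> 1" using assms by (intro powr_le1) auto
  then show ?thesis using assms by simp
next
  case False
  then have "x powr d \<le> x powr 1" using assms by (intro powr_mono) auto
  then show ?thesis using False by simp
qed

lemma set_integrable_Icc_dominated:
  fixes f S :: "real \<Rightarrow> real"
  assumes "f \<in> borel_measurable borel" and S_int: "set_integrable lborel {a..b} S"
    and bound: "\<And>x. x \<in> {a..b} \<Longrightarrow> \<bar>f x\<bar> \<le> C + D * S x"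
  shows "set_integrable lborel {a..b} f"
proof (rule set_integrable_bound)
  show "set_integrable lborel {a..b} (\<lambda>x. C + D * S x)"
    using S_int by (intro set_integral_add(1) set_integrable_mult_right)
      (simp_all add: set_integrable_def integrable_indicator_iff emeasure_lborel_Icc_eq)
  show "set_borel_measurable lborel {a..b} f"
    using assms(1) unfolding set_borel_measurable_def by measurable
  show "AE x in lborel. x \<in> {a..b} \<longrightarrow> norm (f x) \<le> norm (C + D * S x)"
  proof (intro AE_I2 impI)
    fix x assume "x \<in> {a..b}"
    then show "norm (f x) \<le> norm (C + D * S x)"
      using bound[of x] abs_ge_self[of "C + D * S x"] unfolding real_norm_def by linarith
  qed
qed

lemma
  fixes S :: "real \<Rightarrow> real"
  assumes "0 < \<eta>" and S_meas: "S \<in> borel_measurable borel"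
    and S_nonneg: "\<And>x. x \<in> {\<rho>..\<sigma>} \<Longrightarrow> 0 \<le> S x" and S_int: "set_integrable lborel {\<rho>..\<sigma>} S"
  shows set_integrable_inverse_shift: "set_integrable lborel {\<rho>..\<sigma>} (\<lambda>x. 1 / (S x + \<eta>))"
    and set_integrable_inverse_shift_sq: "set_integrable lborel {\<rho>..\<sigma>} (\<lambda>x. (1 / (S x + \<eta>))\<^sup>2 * S x)"
proof -
  have "1 / (S x + \<eta>) \<le> 1 / \<eta>" if "x \<in> {\<rho>..\<sigma>}" for x
    using S_nonneg[OF that] \<open>0 < \<eta>\<close> by (simp add: frac_le)
  then show "set_integrable lborel {\<rho>..\<sigma>} (\<lambda>x. 1 / (S x + \<eta>))"
    using S_nonneg \<open>0 < \<eta>\<close> by (intro set_integrable_Icc_dominated[OF _ S_int, where C="1/\<eta>" and D=0])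
      (use S_meas in auto)
  have "(1 / (S x + \<eta>))\<^sup>2 * S x \<le> (1 / \<eta>)\<^sup>2 * S x" if "x \<in> {\<rho>..\<sigma>}" for x
    using S_nonneg[OF that] \<open>0 < \<eta>\<close> by (intro mult_right_mono power_mono) (auto simp: frac_le)
  then show "set_integrable lborel {\<rho>..\<sigma>} (\<lambda>x. (1 / (S x + \<eta>))\<^sup>2 * S x)"
    using S_nonneg by (intro set_integrable_Icc_dominated[OF _ S_int, where C=0 and D="(1/\<eta>)\<^sup>2"])
      (use S_meas in auto)
qed

lemma inverse_integral_inverse_le_powr_integral:
  fixes S :: "real \<Rightarrow> real"
  assumes "\<rho> < \<sigma>" "0 < \<delta>" "\<delta> \<le> 1" "0 < \<eta>"
    and S_meas[measurable]: "S \<in> borel_measurable borel"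
    and S_nonneg: "\<And>x. x \<in> {\<rho>..\<sigma>} \<Longrightarrow> 0 \<le> S x"
    and S_int: "set_integrable lborel {\<rho>..\<sigma>} S"
  shows "1 / (LINT x:{\<rho>..\<sigma>}|lborel. 1 / (S x + \<eta>))
         \<le> (\<sigma> - \<rho>) powr (-(1 + 1/\<delta>))
            * ((LINT x:{\<rho>..\<sigma>}|lborel. S x powr \<delta>) + (\<sigma> - \<rho>) * \<eta> powr \<delta>) powr (1/\<delta>)"
proof -
  let ?I = "{\<rho>..\<sigma>}"
  have int_pow: "set_integrable lborel ?I (\<lambda>x. S x powr \<delta>)"
  proof (rule set_integrable_Icc_dominated[OF _ S_int, where C=1 and D=1])
    show "\<bar>S x powr \<delta>\<bar> \<le> 1 + 1 * S x" if "x \<in> ?I" for x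
      using powr_le_one_plus[OF S_nonneg[OF that] assms(2,3)] by simp
  qed measurable
  have int_pow_shift: "set_integrable lborel ?I (\<lambda>x. (S x + \<eta>) powr \<delta>)"
  proof (rule set_integrable_Icc_dominated[OF _ S_int, where C="1 + \<eta>" and D=1])
    show "\<bar>(S x + \<eta>) powr \<delta>\<bar> \<le> (1 + \<eta>) + 1 * S x" if "x \<in> ?I" for x
      using powr_le_one_plus[of "S x + \<eta>" \<delta>] S_nonneg[OF that] assms(2-4) by simp
  qed measurable
  have int_inv: "set_integrable lborel ?I (\<lambda>x. 1 / (S x + \<eta>))"
    by (rule set_integrable_inverse_shift[OF \<open>0 < \<eta>\<close> S_meas S_nonneg S_int])
  define A B where "A = (LINT x:?I|lborel. (S x + \<eta>) powr \<delta>)"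
    and "B = (LINT x:?I|lborel. 1 / (S x + \<eta>))"
  have pos: "0 < S x + \<eta>" if "x \<in> ?I" for x using S_nonneg[OF that] \<open>0 < \<eta>\<close> by simp
  have "0 < B" unfolding B_def using pos
    by (intro set_integral_pos_Icc[OF \<open>\<rho> < \<sigma>\<close> _ int_inv]) simp
  have "0 \<le> A" unfolding A_def set_lebesgue_integral_def by (intro integral_nonneg_AE) auto
  have Holder: "(\<sigma> - \<rho>) powr (1 + 1/\<delta>) \<le> A powr (1/\<delta>) * B"
    unfolding A_def B_def using assms int_pow_shift int_inv pos by (intro reverse_Holder_Icc) auto
  have "A \<le> (LINT x:?I|lborel. S x powr \<delta> + \<eta> powr \<delta>)"
    unfolding A_def using S_nonneg assms
    by (intro set_integral_mono[OF int_pow_shift set_integral_add(1)[OF int_pow]] powr_add_le_add_powr)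
      (auto simp: set_integrable_def integrable_indicator_iff)
  also have "\<dots> = (LINT x:?I|lborel. S x powr \<delta>) + (\<sigma> - \<rho>) * \<eta> powr \<delta>"
    using assms int_pow
    by (simp add: set_integral_add set_integral_const set_integrable_def integrable_indicator_iff)
  finally have A_le: "A \<le> \<dots>" .
  have "1 / B \<le> A powr (1/\<delta>) / (\<sigma> - \<rho>) powr (1 + 1/\<delta>)"
    using Holder \<open>0 < B\<close> \<open>\<rho> < \<sigma>\<close> by (simp add: field_simps)
  also have "\<dots> \<le> ((LINT x:?I|lborel. S x powr \<delta>) + (\<sigma> - \<rho>) * \<eta> powr \<delta>) powr (1/\<delta>)
                 / (\<sigma> - \<rho>) powr (1 + 1/\<delta>)"
    using A_le \<open>0 \<le> A\<close> \<open>0 < \<delta>\<close> \<open>\<rho> < \<sigma>\<close> by (intro divide_right_mono powr_mono2) auto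
  finally show ?thesis unfolding B_def powr_minus by (simp add: divide_inverse mult.commute)
qed

section \<open>The one-dimensional problem\<close>

lemma continuous_on_clamped_integral:
  fixes f :: "real \<Rightarrow> real"
  assumes "a \<le> b" "f integrable_on {a..b}"
  shows "continuous_on UNIV (\<lambda>t. integral {a..max a (min t b)} f)"
proof -
  have "continuous_on {a..b} (\<lambda>t. integral {a..t} f)"
    using assms by (intro indefinite_integral_continuous_1) auto
  moreover have "continuous_on UNIV (\<lambda>t. max a (min t b))"
    by (intro continuous_intros)
  moreover have "range (\<lambda>t. max a (min t b)) \<subseteq> {a..b}" using assms by auto
  ultimately show ?thesis by (rule continuous_on_compose2)
qed

lemma ae_tendsto_difference_quotient:
  fixes f :: "real \<Rightarrow> real"
  assumes "\<And>a b. f integrable_on {a..b}"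
  shows "AE x in lborel. (\<lambda>m. integral {x..x + 1 / Suc m} f / (1 / Suc m)) \<longlonglongrightarrow> f x"
proof -
  \<comment> \<open>Lebesgue's differentiation theorem\<close>
  obtain N where "negligible N" and N: "\<And>x e. x \<notin> N \<Longrightarrow> 0 < e \<Longrightarrow> \<exists>d>0. \<forall>h. 0 < h \<and> h < d \<longrightarrow>
      norm (integral (cbox x (x + h *\<^sub>R One)) f /\<^sub>R h ^ DIM(real) - f x) < e"
    using integrable_ccontinuous_explicit[of f] assms by (metis cbox_interval)
  have "AE x in lborel. x \<notin> N"
    using \<open>negligible N\<close> negligible_iff_null_sets AE_not_in AE_completion_iff by blast
  then show ?thesis
  proof (eventually_elim, intro tendstoI)
    fix x e :: real assume "x \<notin> N" "0 < e"
    obtain d where "0 < d" and d: "\<And>h. 0 < h \<Longrightarrow> h < d \<Longrightarrow> \<bar>integral {x..x+h} f / h - f x\<bar> < e"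
      using N[OF \<open>x \<notin> N\<close> \<open>0 < e\<close>] by (auto simp: cbox_interval divide_inverse mult.commute)
    have "\<forall>\<^sub>F m in sequentially. 1 / Suc m < d"
      using order_tendstoD(2)[OF LIMSEQ_inverse_real_of_nat \<open>0 < d\<close>] by (simp add: inverse_eq_divide)
    then show "\<forall>\<^sub>F m in sequentially. dist (integral {x..x + 1 / Suc m} f / (1 / Suc m)) (f x) < e"
    proof eventually_elim
      case (elim m)
      then show ?case using d[of "1 / Suc m"] by (simp add: dist_real_def)
    qed
  qed
qed

lemma ae_tendsto_continuous_approximants:
  fixes S :: "real \<Rightarrow> real"
  assumes "\<rho> < \<sigma>" and S_int: "set_integrable lborel {\<rho>..\<sigma>} S"
  obtains f :: "nat \<Rightarrow> real \<Rightarrow> real"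
  where "\<And>m. continuous_on UNIV (f m)" "AE x in lborel. x \<in> {\<rho><..<\<sigma>} \<longrightarrow> (\<lambda>m. f m x) \<longlonglongrightarrow> S x"
proof -
  define St where "St x = indicator {\<rho>..\<sigma>} x * S x" for x
  have "integrable lborel St" using S_int unfolding set_integrable_def St_def by simp
  then have St_int: "St integrable_on {a..b}" for a b
    using has_integral_integral_lborel integrable_on_subinterval by blast
  define F where "F t = integral {\<rho>..max \<rho> (min t \<sigma>)} St" for t
  have F_cont: "continuous_on UNIV F"
    unfolding F_def using \<open>\<rho> < \<sigma>\<close> St_int[of \<rho> \<sigma>] by (intro continuous_on_clamped_integral) auto
  have F_diff: "F r' - F r = integral {r..r'} St" if "\<rho> \<le> r" "r \<le> r'" "r' \<le> \<sigma>" for r r'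
    using that Henstock_Kurzweil_Integration.integral_combine[of \<rho> r r' St] St_int[of \<rho> r']
    by (simp add: F_def max_def min_def)
  define f where "f m x = (F (x + 1 / Suc m) - F x) * Suc m" for m x
  show ?thesis
  proof
    show "continuous_on UNIV (f m)" for m
      unfolding f_def by (intro continuous_intros continuous_on_compose2[OF F_cont]) auto
    show "AE x in lborel. x \<in> {\<rho><..<\<sigma>} \<longrightarrow> (\<lambda>m. f m x) \<longlonglongrightarrow> S x"
      using ae_tendsto_difference_quotient[OF St_int]
    proof (eventually_elim, intro impI)
      fix x assume lim: "(\<lambda>m. integral {x..x + 1 / Suc m} St / (1 / Suc m)) \<longlonglongrightarrow> St x"
        and x: "x \<in> {\<rho><..<\<sigma>}"
      have "\<forall>\<^sub>F m in sequentially. 1 / Suc m < \<sigma> - x"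
        using order_tendstoD(2)[OF LIMSEQ_inverse_real_of_nat, of "\<sigma> - x"] x by (simp add: inverse_eq_divide)
      then have "\<forall>\<^sub>F m in sequentially. integral {x..x + 1 / Suc m} St / (1 / Suc m) = f m x"
        by eventually_elim (use x in \<open>simp add: f_def F_diff\<close>)
      with lim show "(\<lambda>m. f m x) \<longlonglongrightarrow> S x"
        using x by (simp add: St_def Lim_transform_eventually)
    qed
  qed
qed

definition bump_on :: "real \<Rightarrow> real \<Rightarrow> (real \<Rightarrow> real) \<Rightarrow> bool" where
  "bump_on \<rho> \<sigma> k \<longleftrightarrow> continuous_on UNIV k \<and> (\<forall>x. 0 \<le> k x)
     \<and> (\<exists>a b. \<rho> < a \<and> b < \<sigma> \<and> (\<forall>x. x \<notin> {a..b} \<longrightarrow> k x = 0))"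

lemma continuous_cutoffs:
  fixes \<rho> \<sigma> :: real
  obtains \<zeta> :: "nat \<Rightarrow> real \<Rightarrow> real" where
    "\<And>m. continuous_on UNIV (\<zeta> m)" "\<And>m x. 0 \<le> \<zeta> m x" "\<And>m x. \<zeta> m x \<le> 1"
    "\<And>m x. x \<notin> {\<rho> + 1 / Suc m .. \<sigma> - 1 / Suc m} \<Longrightarrow> \<zeta> m x = 0"
    "\<And>x. x \<in> {\<rho><..<\<sigma>} \<Longrightarrow> (\<lambda>m. \<zeta> m x) \<longlonglongrightarrow> 1"
proof
  define \<zeta> where "\<zeta> m x = max 0 (min 1 (Suc m * min (x - \<rho>) (\<sigma> - x) - 1))" for m :: nat and x
  show "continuous_on UNIV (\<zeta> m)" for m unfolding \<zeta>_def by (intro continuous_intros)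
  show "0 \<le> \<zeta> m x" "\<zeta> m x \<le> 1" for m x by (auto simp: \<zeta>_def)
  show "\<zeta> m x = 0" if "x \<notin> {\<rho> + 1 / Suc m .. \<sigma> - 1 / Suc m}" for m x
  proof -
    have "min (x - \<rho>) (\<sigma> - x) < 1 / Suc m" using that by auto
    then have "Suc m * min (x - \<rho>) (\<sigma> - x) < 1" by (simp add: field_simps)
    then show ?thesis by (simp add: \<zeta>_def)
  qed
  show "(\<lambda>m. \<zeta> m x) \<longlonglongrightarrow> 1" if "x \<in> {\<rho><..<\<sigma>}" for x
  proof (rule tendsto_eventually)
    define c where "c = min (x - \<rho>) (\<sigma> - x)"
    have "0 < c" using that by (auto simp: c_def)
    obtain M :: nat where M: "2 / c < M" using reals_Archimedean2 by blast
    show "\<forall>\<^sub>F m in sequentially. \<zeta> m x = 1"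
    proof (rule eventually_sequentiallyI[of M])
      fix m assume "M \<le> m"
      then have "2 / c < Suc m" using M by linarith
      then have "2 < Suc m * c" using \<open>0 < c\<close> by (simp add: divide_less_eq)
      then show "\<zeta> m x = 1" by (simp add: \<zeta>_def c_def)
    qed
  qed
qed

lemma bumps_tendsto_inverse_shift:
  fixes S :: "real \<Rightarrow> real"
  assumes "\<rho> < \<sigma>" "0 < \<eta>"
    and S_nonneg: "\<And>x. x \<in> {\<rho>..\<sigma>} \<Longrightarrow> 0 \<le> S x"
    and S_int: "set_integrable lborel {\<rho>..\<sigma>} S"
  obtains k :: "nat \<Rightarrow> real \<Rightarrow> real" where
    "\<And>m. bump_on \<rho> \<sigma> (k m)" "\<And>m x. k m x \<le> 1 / \<eta>"
    "AE x in lborel. x \<in> {\<rho>..\<sigma>} \<longrightarrow> (\<lambda>m. k m x) \<longlonglongrightarrow> 1 / (S x + \<eta>)"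
proof -
  obtain f :: "nat \<Rightarrow> real \<Rightarrow> real" where f_cont: "\<And>m. continuous_on UNIV (f m)"
    and f_lim: "AE x in lborel. x \<in> {\<rho><..<\<sigma>} \<longrightarrow> (\<lambda>m. f m x) \<longlonglongrightarrow> S x"
    using ae_tendsto_continuous_approximants[OF assms(1) S_int] by metis
  obtain \<zeta> :: "nat \<Rightarrow> real \<Rightarrow> real" where \<zeta>_cont: "\<And>m. continuous_on UNIV (\<zeta> m)"
    and \<zeta>_01: "\<And>m x. 0 \<le> \<zeta> m x" "\<And>m x. \<zeta> m x \<le> 1"
    and \<zeta>_supp: "\<And>m x. x \<notin> {\<rho> + 1 / Suc m .. \<sigma> - 1 / Suc m} \<Longrightarrow> \<zeta> m x = 0"
    and \<zeta>_lim: "\<And>x. x \<in> {\<rho><..<\<sigma>} \<Longrightarrow> (\<lambda>m. \<zeta> m x) \<longlonglongrightarrow> 1"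
    using continuous_cutoffs[of \<rho> \<sigma>] by metis
  define k where "k m x = \<zeta> m x / (max (f m x) 0 + \<eta>)" for m x
  show ?thesis
  proof
    show "bump_on \<rho> \<sigma> (k m)" for m
      unfolding bump_on_def
    proof (intro conjI)
      show "continuous_on UNIV (k m)"
        unfolding k_def using f_cont \<zeta>_cont \<open>0 < \<eta>\<close>
        by (intro continuous_intros) (auto simp: add_nonneg_pos)
      show "\<forall>x. 0 \<le> k m x" using \<zeta>_01 \<open>0 < \<eta>\<close> by (simp add: k_def)
      show "\<exists>a b. \<rho> < a \<and> b < \<sigma> \<and> (\<forall>x. x \<notin> {a..b} \<longrightarrow> k m x = 0)"
        using \<zeta>_supp by (intro exI[of _ "\<rho> + 1 / Suc m"] exI[of _ "\<sigma> - 1 / Suc m"]) (simp add: k_def)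
    qed
    show "k m x \<le> 1 / \<eta>" for m x
      using \<zeta>_01[of m x] \<open>0 < \<eta>\<close> unfolding k_def by (intro frac_le) auto
    show "AE x in lborel. x \<in> {\<rho>..\<sigma>} \<longrightarrow> (\<lambda>m. k m x) \<longlonglongrightarrow> 1 / (S x + \<eta>)"
      using f_lim AE_lborel_singleton[of \<rho>] AE_lborel_singleton[of \<sigma>]
    proof (eventually_elim, intro impI)
      fix x assume x: "x \<in> {\<rho><..<\<sigma>} \<longrightarrow> (\<lambda>m. f m x) \<longlonglongrightarrow> S x" "x \<noteq> \<rho>" "x \<noteq> \<sigma>" "x \<in> {\<rho>..\<sigma>}"
      then have "x \<in> {\<rho><..<\<sigma>}" by auto
      then have "(\<lambda>m. \<zeta> m x) \<longlonglongrightarrow> 1" "(\<lambda>m. f m x) \<longlonglongrightarrow> S x" using x \<zeta>_lim by auto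
      then have "(\<lambda>m. k m x) \<longlonglongrightarrow> 1 / (max (S x) 0 + \<eta>)"
        unfolding k_def using \<open>0 < \<eta>\<close> S_nonneg[OF x(4)]
        by (intro tendsto_intros) auto
      then show "(\<lambda>m. k m x) \<longlonglongrightarrow> 1 / (S x + \<eta>)" using S_nonneg[OF x(4)] by simp
    qed
  qed
qed

lemma set_integral_dominated_convergence:
  fixes f :: "nat \<Rightarrow> real \<Rightarrow> real" and g w :: "real \<Rightarrow> real"
  assumes "A \<in> sets borel" "\<And>m. f m \<in> borel_measurable borel" "g \<in> borel_measurable borel"
    and w: "set_integrable lborel A w" and bound: "\<And>m x. x \<in> A \<Longrightarrow> \<bar>f m x\<bar> \<le> w x"
    and lim: "AE x in lborel. x \<in> A \<longrightarrow> (\<lambda>m. f m x) \<longlonglongrightarrow> g x"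
  shows "(\<lambda>m. LINT x:A|lborel. f m x) \<longlonglongrightarrow> (LINT x:A|lborel. g x)"
  unfolding set_lebesgue_integral_def
proof (rule integral_dominated_convergence)
  show "(\<lambda>x. indicator A x *\<^sub>R g x) \<in> borel_measurable lborel"
    "\<And>m. (\<lambda>x. indicator A x *\<^sub>R f m x) \<in> borel_measurable lborel"
    using assms(1-3) by measurable
  show "integrable lborel (\<lambda>x. indicator A x * w x)"
    using w unfolding set_integrable_def by simp
  show "AE x in lborel. (\<lambda>m. indicator A x *\<^sub>R f m x) \<longlonglongrightarrow> indicator A x *\<^sub>R g x"
    using lim by eventually_elim (auto simp: indicator_def)
  show "\<And>m. AE x in lborel. norm (indicator A x *\<^sub>R f m x) \<le> indicator A x * w x"
    using bound by (intro AE_I2) (simp add: indicator_def)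
qed

lemma integral_inverse_shift_quotient_le:
  fixes S :: "real \<Rightarrow> real"
  assumes "0 < \<eta>" and S_meas: "S \<in> borel_measurable borel"
    and S_nonneg: "\<And>x. x \<in> {\<rho>..\<sigma>} \<Longrightarrow> 0 \<le> S x" and S_int: "set_integrable lborel {\<rho>..\<sigma>} S"
  shows "(LINT x:{\<rho>..\<sigma>}|lborel. (1 / (S x + \<eta>))\<^sup>2 * S x) / (LINT x:{\<rho>..\<sigma>}|lborel. 1 / (S x + \<eta>))\<^sup>2
         \<le> 1 / (LINT x:{\<rho>..\<sigma>}|lborel. 1 / (S x + \<eta>))"
proof -
  define D N where "D = (LINT x:{\<rho>..\<sigma>}|lborel. 1 / (S x + \<eta>))"
    and "N = (LINT x:{\<rho>..\<sigma>}|lborel. (1 / (S x + \<eta>))\<^sup>2 * S x)"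
  have "0 \<le> D" unfolding D_def set_lebesgue_integral_def
    using S_nonneg \<open>0 < \<eta>\<close> by (intro integral_nonneg_AE AE_I2) (simp add: indicator_def)
  moreover have "N \<le> D"
    unfolding N_def D_def
  proof (intro set_integral_mono set_integrable_inverse_shift set_integrable_inverse_shift_sq assms)
    fix x assume "x \<in> {\<rho>..\<sigma>}"
    then have "S x / (S x + \<eta>) \<le> 1" using S_nonneg[of x] \<open>0 < \<eta>\<close> by simp
    then have "1 / (S x + \<eta>) * (S x / (S x + \<eta>)) \<le> 1 / (S x + \<eta>)"
      using S_nonneg[OF \<open>x \<in> {\<rho>..\<sigma>}\<close>] \<open>0 < \<eta>\<close> by (intro mult_left_le) auto
    then show "(1 / (S x + \<eta>))\<^sup>2 * S x \<le> 1 / (S x + \<eta>)" by (simp add: power2_eq_square)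
  qed
  ultimately show ?thesis
    unfolding N_def[symmetric] D_def[symmetric]
    by (cases "D = 0") (simp_all add: power2_eq_square divide_simps)
qed

lemma tendsto_integrals_inverse_shift:
  fixes S :: "real \<Rightarrow> real" and k :: "nat \<Rightarrow> real \<Rightarrow> real"
  assumes "\<rho> < \<sigma>" and S_meas[measurable]: "S \<in> borel_measurable borel"
    and S_nonneg: "\<And>x. x \<in> {\<rho>..\<sigma>} \<Longrightarrow> 0 \<le> S x" and S_int: "set_integrable lborel {\<rho>..\<sigma>} S"
    and k_meas[measurable]: "\<And>m. k m \<in> borel_measurable borel"
    and k_nonneg: "\<And>m x. 0 \<le> k m x" and k_le: "\<And>m x. k m x \<le> 1 / \<eta>"
    and k_lim: "AE x in lborel. x \<in> {\<rho>..\<sigma>} \<longrightarrow> (\<lambda>m. k m x) \<longlonglongrightarrow> 1 / (S x + \<eta>)"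
  shows "(\<lambda>m. LINT x:{\<rho>..\<sigma>}|lborel. k m x) \<longlonglongrightarrow> (LINT x:{\<rho>..\<sigma>}|lborel. 1 / (S x + \<eta>))"
    and "(\<lambda>m. LINT x:{\<rho>..\<sigma>}|lborel. (k m x)\<^sup>2 * S x) \<longlonglongrightarrow> (LINT x:{\<rho>..\<sigma>}|lborel. (1 / (S x + \<eta>))\<^sup>2 * S x)"
proof -
  show "(\<lambda>m. LINT x:{\<rho>..\<sigma>}|lborel. k m x) \<longlonglongrightarrow> (LINT x:{\<rho>..\<sigma>}|lborel. 1 / (S x + \<eta>))"
    using k_le k_nonneg \<open>\<rho> < \<sigma>\<close>
    by (intro set_integral_dominated_convergence[OF _ k_meas _ _ _ k_lim, where w="\<lambda>_. 1 / \<eta>"])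
      (auto simp: set_integrable_def integrable_indicator_iff)
  show "(\<lambda>m. LINT x:{\<rho>..\<sigma>}|lborel. (k m x)\<^sup>2 * S x) \<longlonglongrightarrow> (LINT x:{\<rho>..\<sigma>}|lborel. (1 / (S x + \<eta>))\<^sup>2 * S x)"
  proof (rule set_integral_dominated_convergence[where w="\<lambda>x. (1 / \<eta>)\<^sup>2 * S x"])
    show "set_integrable lborel {\<rho>..\<sigma>} (\<lambda>x. (1 / \<eta>)\<^sup>2 * S x)"
      using S_int by (rule set_integrable_mult_right)
    show "\<bar>(k m x)\<^sup>2 * S x\<bar> \<le> (1 / \<eta>)\<^sup>2 * S x" if "x \<in> {\<rho>..\<sigma>}" for m x
      using S_nonneg[OF that] k_nonneg[of m x] k_le[of m x]
      by (simp add: abs_mult mult_right_mono power_mono)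
    show "AE x in lborel. x \<in> {\<rho>..\<sigma>} \<longrightarrow> (\<lambda>m. (k m x)\<^sup>2 * S x) \<longlonglongrightarrow> (1 / (S x + \<eta>))\<^sup>2 * S x"
      using k_lim by eventually_elim (auto intro: tendsto_intros)
  qed measurable
qed

lemma le_inverse_integral_inverse_shift:
  fixes S :: "real \<Rightarrow> real"
  assumes "\<rho> < \<sigma>" "0 < \<eta>"
    and S_meas: "S \<in> borel_measurable borel"
    and S_nonneg: "\<And>x. x \<in> {\<rho>..\<sigma>} \<Longrightarrow> 0 \<le> S x"
    and S_int: "set_integrable lborel {\<rho>..\<sigma>} S"
    and le_quotient: "\<And>k. bump_on \<rho> \<sigma> k \<Longrightarrow> 0 < (LINT x:{\<rho>..\<sigma>}|lborel. k x) \<Longrightarrow>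
       j \<le> (LINT x:{\<rho>..\<sigma>}|lborel. (k x)\<^sup>2 * S x) / (LINT x:{\<rho>..\<sigma>}|lborel. k x)\<^sup>2"
  shows "j \<le> 1 / (LINT x:{\<rho>..\<sigma>}|lborel. 1 / (S x + \<eta>))"
proof -
  let ?I = "{\<rho>..\<sigma>}"
  obtain k :: "nat \<Rightarrow> real \<Rightarrow> real" where bump: "\<And>m. bump_on \<rho> \<sigma> (k m)"
    and k_le: "\<And>m x. k m x \<le> 1 / \<eta>"
    and k_lim: "AE x in lborel. x \<in> ?I \<longrightarrow> (\<lambda>m. k m x) \<longlonglongrightarrow> 1 / (S x + \<eta>)"
    using bumps_tendsto_inverse_shift[OF assms(1,2) S_nonneg S_int] by blast
  have "k m \<in> borel_measurable borel" "0 \<le> k m x" for m x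
    using bump[of m] by (auto simp: bump_on_def intro: borel_measurable_continuous_onI)
  note lim = tendsto_integrals_inverse_shift[OF assms(1) S_meas S_nonneg S_int this k_le k_lim]
  define D N where "D m = (LINT x:?I|lborel. k m x)" and "N m = (LINT x:?I|lborel. (k m x)\<^sup>2 * S x)" for m
  define D_lim N_lim where "D_lim = (LINT x:?I|lborel. 1 / (S x + \<eta>))"
    and "N_lim = (LINT x:?I|lborel. (1 / (S x + \<eta>))\<^sup>2 * S x)"
  have "0 < D_lim" unfolding D_lim_def using S_nonneg \<open>0 < \<eta>\<close>
    by (intro set_integral_pos_Icc[OF \<open>\<rho> < \<sigma>\<close> _
          set_integrable_inverse_shift[OF \<open>0 < \<eta>\<close> S_meas S_nonneg S_int]])
      (simp add: add_nonneg_pos)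
  with lim have "(\<lambda>m. N m / (D m)\<^sup>2) \<longlonglongrightarrow> N_lim / D_lim\<^sup>2" and "\<forall>\<^sub>F m in sequentially. 0 < D m"
    unfolding D_def N_def D_lim_def N_lim_def by (auto intro: tendsto_intros order_tendstoD(1))
  moreover from this(2) have "\<forall>\<^sub>F m in sequentially. j \<le> N m / (D m)\<^sup>2"
    by eventually_elim (simp add: D_def N_def le_quotient bump)
  ultimately have "j \<le> N_lim / D_lim\<^sup>2"
    by (intro tendsto_lowerbound) auto
  also have "\<dots> \<le> 1 / D_lim"
    unfolding N_lim_def D_lim_def by (rule integral_inverse_shift_quotient_le[OF assms(2-5)])
  finally show ?thesis unfolding D_lim_def .
qed

lemma le_powr_integral_if_le_bump_quotients:
  fixes S :: "real \<Rightarrow> real"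
  assumes "\<rho> < \<sigma>" "0 < \<delta>" "\<delta> \<le> 1"
    and S_meas: "S \<in> borel_measurable borel"
    and S_nonneg: "\<And>x. x \<in> {\<rho>..\<sigma>} \<Longrightarrow> 0 \<le> S x"
    and S_int: "set_integrable lborel {\<rho>..\<sigma>} S"
    and le_quotient: "\<And>k. bump_on \<rho> \<sigma> k \<Longrightarrow> 0 < (LINT x:{\<rho>..\<sigma>}|lborel. k x) \<Longrightarrow>
       j \<le> (LINT x:{\<rho>..\<sigma>}|lborel. (k x)\<^sup>2 * S x) / (LINT x:{\<rho>..\<sigma>}|lborel. k x)\<^sup>2"
  shows "j \<le> (\<sigma> - \<rho>) powr (-(1 + 1/\<delta>)) * (LINT r:{\<rho>..\<sigma>}|lborel. S r powr \<delta>) powr (1/\<delta>)"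
proof -
  define A where "A = (LINT r:{\<rho>..\<sigma>}|lborel. S r powr \<delta>)"
  define bound where "bound \<eta> = (\<sigma> - \<rho>) powr (-(1 + 1/\<delta>)) * (A + (\<sigma> - \<rho>) * \<eta> powr \<delta>) powr (1/\<delta>)"
    for \<eta>
  have "j \<le> bound \<eta>" if "0 < \<eta>" for \<eta>
    using le_inverse_integral_inverse_shift[OF assms(1) that S_meas S_nonneg S_int le_quotient]
      inverse_integral_inverse_le_powr_integral[OF assms(1-3) that S_meas S_nonneg S_int]
    unfolding bound_def A_def by linarith
  then have "\<forall>\<^sub>F \<eta> in at_right 0. j \<le> bound \<eta>"
    by (auto simp: eventually_at_right_field intro: exI[of _ 1])
  moreover have "(bound \<longlongrightarrow> (\<sigma> - \<rho>) powr (-(1 + 1/\<delta>)) * A powr (1/\<delta>)) (at_right 0)"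
  proof -
    have "((\<lambda>\<eta>. \<eta> powr \<delta>) \<longlongrightarrow> 0) (at_right 0)"
      using \<open>0 < \<delta>\<close> by (intro tendsto_zero_powrI tendsto_ident_at tendsto_const)
        (auto simp: eventually_at_right_field intro: exI[of _ 1])
    moreover have "0 \<le> A" unfolding A_def set_lebesgue_integral_def
      by (intro integral_nonneg_AE) auto
    ultimately have "((\<lambda>\<eta>. A + (\<sigma> - \<rho>) * \<eta> powr \<delta>) \<longlongrightarrow> A + (\<sigma> - \<rho>) * 0) (at_right 0)"
      by (intro tendsto_intros)
    then have "((\<lambda>\<eta>. (A + (\<sigma> - \<rho>) * \<eta> powr \<delta>) powr (1/\<delta>)) \<longlongrightarrow> A powr (1/\<delta>)) (at_right 0)"
      using \<open>0 < \<delta>\<close> \<open>0 \<le> A\<close> \<open>\<rho> < \<sigma>\<close>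
      by (intro tendsto_powr'[where a=A, simplified]) (auto intro!: always_eventually)
    then show ?thesis unfolding bound_def by (intro tendsto_mult tendsto_const)
  qed
  ultimately show ?thesis unfolding A_def by (intro tendsto_lowerbound) auto
qed

section \<open>Polar coordinates\<close>

lemma measurable_mem_ball_0 [measurable (raw)]:
  fixes f :: "'b \<Rightarrow> 'a::euclidean_space"
  assumes "f \<in> M \<rightarrow>\<^sub>M borel" "g \<in> borel_measurable M"
  shows "Measurable.pred M (\<lambda>x. f x \<in> ball 0 (g x))"
  unfolding mem_ball_0 using assms by measurable

lemma nn_integral_lborel_dilation:
  fixes F :: "'a::euclidean_space \<Rightarrow> ennreal" and c :: real
  assumes [measurable]: "F \<in> borel_measurable borel" and "0 < c"
  shows "(\<integral>\<^sup>+x. F (c *\<^sub>R x) \<partial>lborel) = ennreal (1 / c ^ DIM('a)) * (\<integral>\<^sup>+x. F x \<partial>lborel)"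
proof -
  have "(\<integral>\<^sup>+x. F x \<partial>lborel) = (\<integral>\<^sup>+x. F x \<partial>density (distr lborel borel (\<lambda>x. 0 + c *\<^sub>R x)) (\<lambda>_. \<bar>c\<bar> ^ DIM('a)))"
    using lborel_affine[of c "0::'a"] \<open>0 < c\<close> by simp
  also have "\<dots> = ennreal (c ^ DIM('a)) * (\<integral>\<^sup>+x. F (c *\<^sub>R x) \<partial>lborel)"
    using \<open>0 < c\<close> by (simp add: nn_integral_density nn_integral_distr nn_integral_cmult)
  finally have "ennreal (1 / c ^ DIM('a)) * (\<integral>\<^sup>+x. F x \<partial>lborel)
      = ennreal (1 / c ^ DIM('a)) * ennreal (c ^ DIM('a)) * (\<integral>\<^sup>+x. F (c *\<^sub>R x) \<partial>lborel)"
    by (simp add: mult.assoc)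
  also have "ennreal (1 / c ^ DIM('a)) * ennreal (c ^ DIM('a)) = 1"
    using \<open>0 < c\<close> by (simp flip: ennreal_mult)
  finally show ?thesis by simp
qed

lemma nn_integral_inverse_power_tail:
  fixes a :: real and n :: nat
  assumes "0 < a" "1 \<le> n"
  shows "(\<integral>\<^sup>+s. indicator {a<..} s * ennreal (n / s ^ (n + 1)) \<partial>lborel) = ennreal (1 / a ^ n)"
proof -
  have "(\<integral>\<^sup>+s. indicator {a<..} s * ennreal (n / s ^ (n + 1)) \<partial>lborel)
      = (\<integral>\<^sup>+s. ennreal (n / s ^ (n + 1)) * indicator {a..} s \<partial>lborel)"
    by (intro nn_integral_cong_AE, use AE_lborel_singleton[of a] in eventually_elim)
      (auto simp: indicator_def)
  also have "\<dots> = ennreal (0 - (- inverse (a ^ n)))"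
  proof (rule nn_integral_FTC_atLeast)
    show "DERIV (\<lambda>s. - inverse (s ^ n)) x :> n / x ^ (n + 1)" if "a \<le> x" for x
    proof -
      have "x \<noteq> 0" using that \<open>0 < a\<close> by auto
      then have "DERIV (\<lambda>s. - inverse (s ^ n)) x :> - (- ((n * x ^ (n - 1)) * inverse ((x ^ n) ^ Suc (Suc 0))))"
        by (intro DERIV_minus DERIV_inverse_fun DERIV_pow) auto
      moreover have "(n * x ^ (n - 1)) * inverse ((x ^ n) ^ Suc (Suc 0)) = n / x ^ (n + 1)"
        using \<open>x \<noteq> 0\<close> \<open>1 \<le> n\<close> by (cases n) (auto simp: field_simps)
      ultimately show ?thesis by simp
    qed
    have "filterlim (\<lambda>s::real. s ^ n) at_top at_top"
      using \<open>1 \<le> n\<close> by (intro filterlim_pow_at_top filterlim_ident) auto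
    then show "((\<lambda>s::real. - inverse (s ^ n)) \<longlongrightarrow> 0) at_top"
      using tendsto_minus[OF tendsto_inverse_0_at_top] by fastforce
  qed (use \<open>0 < a\<close> in auto)
  finally show ?thesis by (simp add: divide_inverse)
qed

lemma nn_integral_cone_ray:
  fixes F :: "'a::euclidean_space \<Rightarrow> ennreal" and x :: 'a
  assumes [measurable]: "F \<in> borel_measurable borel" and "x \<noteq> 0"
  shows "(\<integral>\<^sup>+r. indicator {0<..} r * ennreal (DIM('a) / r) * indicator (ball 0 r) x
              * F ((r / norm x) *\<^sub>R x) \<partial>lborel)
       = (\<integral>\<^sup>+t. indicator {1<..} t * ennreal (DIM('a) / t) * F (t *\<^sub>R x) \<partial>lborel)"
    (is "(\<integral>\<^sup>+r. ?f r \<partial>lborel) = _")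
proof -
  define c where "c = norm x"
  have "0 < c" using \<open>x \<noteq> 0\<close> by (simp add: c_def)
  have "(\<integral>\<^sup>+r. ?f r \<partial>lborel) = ennreal c * (\<integral>\<^sup>+t. ?f (0 + c * t) \<partial>lborel)"
    using nn_integral_real_affine[of ?f c 0] \<open>0 < c\<close> by simp
  also have "\<dots> = (\<integral>\<^sup>+t. ennreal c * ?f (c * t) \<partial>lborel)"
    by (simp add: nn_integral_cmult)
  also have "\<dots> = (\<integral>\<^sup>+t. indicator {1<..} t * ennreal (DIM('a) / t) * F (t *\<^sub>R x) \<partial>lborel)"
  proof (intro nn_integral_cong)
    fix t :: real
    show "ennreal c * ?f (c * t) = indicator {1<..} t * ennreal (DIM('a) / t) * F (t *\<^sub>R x)"
    proof (cases "1 < t")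
      case True
      then have "ennreal c * ennreal (DIM('a) / (c * t)) = ennreal (DIM('a) / t)"
        using \<open>0 < c\<close> by (simp flip: ennreal_mult)
      moreover have "x \<in> ball 0 (c * t)" "0 < c * t"
        using True \<open>0 < c\<close> by (simp_all add: c_def)
      ultimately show ?thesis using True \<open>0 < c\<close> by (simp add: c_def mult.assoc[symmetric])
    next
      case False
      then have "x \<notin> ball 0 (c * t)" using \<open>0 < c\<close> by (simp add: c_def)
      then show ?thesis using False by simp
    qed
  qed
  finally show ?thesis .
qed

lemma nn_integral_polar_cone:
  fixes F :: "'a::euclidean_space \<Rightarrow> ennreal"
  assumes [measurable]: "F \<in> borel_measurable borel"
  shows "(\<integral>\<^sup>+x. F x \<partial>lborel) = (\<integral>\<^sup>+r. indicator {0<..} r * ennreal (DIM('a) / r)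
           * (\<integral>\<^sup>+x. indicator (ball 0 r) x * F ((r / norm x) *\<^sub>R x) \<partial>lborel) \<partial>lborel)"
proof -
  let ?n = "DIM('a)"
  have "1 \<le> ?n" by (simp add: DIM_positive Suc_leI)
  have "(\<integral>\<^sup>+r. indicator {0<..} r * ennreal (?n / r)
           * (\<integral>\<^sup>+x. indicator (ball 0 r) x * F ((r / norm x) *\<^sub>R x) \<partial>lborel) \<partial>lborel)
      = (\<integral>\<^sup>+r. \<integral>\<^sup>+x. indicator {0<..} r * ennreal (?n / r) * indicator (ball 0 r) x
           * F ((r / norm x) *\<^sub>R x) \<partial>lborel \<partial>lborel)"
    by (simp add: nn_integral_cmult mult.assoc)
  also have "\<dots> = (\<integral>\<^sup>+x. \<integral>\<^sup>+r. indicator {0<..} r * ennreal (?n / r) * indicator (ball 0 r) x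
           * F ((r / norm x) *\<^sub>R x) \<partial>lborel \<partial>lborel)"
    by (rule lborel_pair.Fubini'[symmetric]) measurable
  also have "\<dots> = (\<integral>\<^sup>+x. \<integral>\<^sup>+t. indicator {1<..} t * ennreal (?n / t) * F (t *\<^sub>R x) \<partial>lborel \<partial>lborel)"
    by (intro nn_integral_cong_AE, use AE_lborel_singleton[of 0] in eventually_elim)
      (simp add: nn_integral_cone_ray)
  also have "\<dots> = (\<integral>\<^sup>+t. \<integral>\<^sup>+x. indicator {1<..} t * ennreal (?n / t) * F (t *\<^sub>R x) \<partial>lborel \<partial>lborel)"
    by (rule lborel_pair.Fubini') measurable
  also have "\<dots> = (\<integral>\<^sup>+t. indicator {1<..} t * ennreal (?n / t ^ (?n + 1)) * (\<integral>\<^sup>+x. F x \<partial>lborel) \<partial>lborel)"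
  proof (intro nn_integral_cong)
    fix t :: real
    have "ennreal (?n / t) * ennreal (1 / t ^ ?n) = ennreal (?n / t ^ (?n + 1))" if "1 < t"
      using that by (simp flip: ennreal_mult)
    then show "(\<integral>\<^sup>+x. indicator {1<..} t * ennreal (?n / t) * F (t *\<^sub>R x) \<partial>lborel)
        = indicator {1<..} t * ennreal (?n / t ^ (?n + 1)) * (\<integral>\<^sup>+x. F x \<partial>lborel)"
      by (cases "1 < t") (simp_all add: nn_integral_cmult nn_integral_lborel_dilation mult.assoc[symmetric])
  qed
  also have "\<dots> = (\<integral>\<^sup>+x. F x \<partial>lborel)"
    using nn_integral_inverse_power_tail[of 1 ?n] \<open>1 \<le> ?n\<close> by (simp add: nn_integral_multc)
  finally show ?thesis ..
qed

definition sphere_nn_int_abs :: "('a::euclidean_space \<Rightarrow> real) \<Rightarrow> real \<Rightarrow> ennreal" where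
  "sphere_nn_int_abs v r =
     ennreal (DIM('a) / r) * (\<integral>\<^sup>+x. indicator (ball 0 r) x * ennreal \<bar>v ((r / norm x) *\<^sub>R x)\<bar> \<partial>lborel)"

lemma measurable_sphere_nn_int_abs [measurable]:
  fixes v :: "'a::euclidean_space \<Rightarrow> real"
  assumes [measurable]: "v \<in> borel_measurable borel"
  shows "sphere_nn_int_abs v \<in> borel_measurable borel"
  unfolding sphere_nn_int_abs_def[abs_def] by measurable

lemma sphere_int_abs_eq_enn2real:
  fixes v :: "'a::euclidean_space \<Rightarrow> real"
  assumes [measurable]: "v \<in> borel_measurable borel" and "0 < r"
  shows "sphere_int_abs v r = enn2real (sphere_nn_int_abs v r)"
proof -
  have "(\<integral>x\<in>ball 0 r. \<bar>v ((r / norm x) *\<^sub>R x)\<bar> \<partial>lebesgue)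
      = (\<integral>x. indicator (ball 0 r) x * \<bar>v ((r / norm x) *\<^sub>R x)\<bar> \<partial>lborel)"
    unfolding set_lebesgue_integral_def by (simp add: integral_completion)
  also have "\<dots> = enn2real (\<integral>\<^sup>+x. indicator (ball 0 r) x * ennreal \<bar>v ((r / norm x) *\<^sub>R x)\<bar> \<partial>lborel)"
    by (subst integral_eq_nn_integral) (auto intro!: arg_cong[where f=enn2real] nn_integral_cong
        simp: indicator_def)
  finally show ?thesis
    using \<open>0 < r\<close> by (simp add: sphere_int_abs_def sphere_nn_int_abs_def enn2real_mult)
qed

lemma measurable_sphere_int_abs [measurable]:
  fixes v :: "'a::euclidean_space \<Rightarrow> real"
  assumes [measurable]: "v \<in> borel_measurable borel"
  shows "sphere_int_abs v \<in> borel_measurable borel"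
proof -
  have "sphere_int_abs v r = (if 0 < r then enn2real (sphere_nn_int_abs v r) else 0)" for r
    using sphere_int_abs_eq_enn2real[OF assms, of r]
    by (simp add: sphere_int_abs_def ball_empty set_lebesgue_integral_def)
  then have "sphere_int_abs v = (\<lambda>r. if 0 < r then enn2real (sphere_nn_int_abs v r) else 0)" ..
  then show ?thesis by simp
qed

lemma sphere_int_abs_nonneg:
  fixes v :: "'a::euclidean_space \<Rightarrow> real"
  assumes "v \<in> borel_measurable borel" "0 < r"
  shows "0 \<le> sphere_int_abs v r"
  using sphere_int_abs_eq_enn2real[OF assms] by simp

lemma nn_integral_radial_weight_polar:
  fixes v :: "'a::euclidean_space \<Rightarrow> real" and \<psi> :: "real \<Rightarrow> real"
  assumes [measurable]: "v \<in> borel_measurable borel" "\<psi> \<in> borel_measurable borel"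
    and \<psi>_nonneg: "\<And>r. 0 \<le> \<psi> r"
  shows "(\<integral>\<^sup>+x. ennreal (\<bar>v x\<bar> * \<psi> (norm x)) \<partial>lborel)
       = (\<integral>\<^sup>+r. indicator {0<..} r * ennreal (\<psi> r) * sphere_nn_int_abs v r \<partial>lborel)"
proof -
  have inner: "(\<integral>\<^sup>+x. indicator (ball 0 r) x
        * ennreal (\<bar>v ((r / norm x) *\<^sub>R x)\<bar> * \<psi> (norm ((r / norm x) *\<^sub>R x))) \<partial>lborel)
      = ennreal (\<psi> r) * (\<integral>\<^sup>+x. indicator (ball 0 r) x * ennreal \<bar>v ((r / norm x) *\<^sub>R x)\<bar> \<partial>lborel)"
    if "0 < r" for r
  proof -
    have "AE x in lborel. indicator (ball 0 r) x
        * ennreal (\<bar>v ((r / norm x) *\<^sub>R x)\<bar> * \<psi> (norm ((r / norm x) *\<^sub>R x)))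
        = ennreal (\<psi> r) * (indicator (ball 0 r) x * ennreal \<bar>v ((r / norm x) *\<^sub>R x)\<bar>)"
      using AE_lborel_singleton[of 0]
      by eventually_elim (use \<open>0 < r\<close> \<psi>_nonneg[of r] in \<open>simp add: ennreal_mult mult_ac\<close>)
    then show ?thesis by (simp add: nn_integral_cong_AE nn_integral_cmult)
  qed
  have "(\<integral>\<^sup>+x. ennreal (\<bar>v x\<bar> * \<psi> (norm x)) \<partial>lborel)
      = (\<integral>\<^sup>+r. indicator {0<..} r * ennreal (DIM('a) / r) * (\<integral>\<^sup>+x. indicator (ball 0 r) x
           * ennreal (\<bar>v ((r / norm x) *\<^sub>R x)\<bar> * \<psi> (norm ((r / norm x) *\<^sub>R x))) \<partial>lborel) \<partial>lborel)"
    by (rule nn_integral_polar_cone) measurable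
  also have "\<dots> = (\<integral>\<^sup>+r. indicator {0<..} r * ennreal (\<psi> r) * sphere_nn_int_abs v r \<partial>lborel)"
  proof (intro nn_integral_cong)
    fix r :: real
    show "indicator {0<..} r * ennreal (DIM('a) / r) * (\<integral>\<^sup>+x. indicator (ball 0 r) x
           * ennreal (\<bar>v ((r / norm x) *\<^sub>R x)\<bar> * \<psi> (norm ((r / norm x) *\<^sub>R x))) \<partial>lborel)
        = indicator {0<..} r * ennreal (\<psi> r) * sphere_nn_int_abs v r"
      by (cases "0 < r") (simp_all only: inner, simp_all add: sphere_nn_int_abs_def mult_ac)
  qed
  finally show ?thesis .
qed

lemma nn_integral_shell_finite:
  fixes v :: "'a::euclidean_space \<Rightarrow> real"
  assumes [measurable]: "v \<in> borel_measurable borel" and v_int: "set_integrable lebesgue (ball 0 \<sigma>) v"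
  shows "(\<integral>\<^sup>+x. ennreal (\<bar>v x\<bar> * indicator {\<rho>..<\<sigma>} (norm x)) \<partial>lborel) < \<infinity>"
proof -
  have "integrable lborel (\<lambda>x. indicator (ball 0 \<sigma>) x *\<^sub>R v x)"
    using v_int unfolding set_integrable_def by (subst integrable_completion[symmetric]) measurable
  then have "(\<integral>\<^sup>+x. ennreal (norm (indicator (ball 0 \<sigma>) x *\<^sub>R v x)) \<partial>lborel) < \<infinity>"
    by (simp add: integrable_iff_bounded)
  moreover have "(\<integral>\<^sup>+x. ennreal (\<bar>v x\<bar> * indicator {\<rho>..<\<sigma>} (norm x)) \<partial>lborel)
      \<le> (\<integral>\<^sup>+x. ennreal (norm (indicator (ball 0 \<sigma>) x *\<^sub>R v x)) \<partial>lborel)"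
    by (intro nn_integral_mono) (auto simp: indicator_def)
  ultimately show ?thesis by simp
qed

lemma ae_sphere_nn_int_abs_eq:
  fixes v :: "'a::euclidean_space \<Rightarrow> real"
  assumes [measurable]: "v \<in> borel_measurable borel"
    and v_int: "set_integrable lebesgue (ball 0 \<sigma>) v" and "0 < \<rho>"
  shows "AE r in lborel. r \<in> {\<rho>..<\<sigma>} \<longrightarrow> sphere_nn_int_abs v r = ennreal (sphere_int_abs v r)"
proof -
  have "(\<integral>\<^sup>+r. indicator {0<..} r * ennreal (indicator {\<rho>..<\<sigma>} r) * sphere_nn_int_abs v r \<partial>lborel) \<noteq> \<infinity>"
    using nn_integral_shell_finite[OF assms(1) v_int, of \<rho>]
    by (subst nn_integral_radial_weight_polar[symmetric]) auto
  then have "AE r in lborel. indicator {0<..} r * ennreal (indicator {\<rho>..<\<sigma>} r) * sphere_nn_int_abs v r \<noteq> \<infinity>"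
    by (intro nn_integral_noteq_infinite) measurable
  then show ?thesis
  proof (eventually_elim, intro impI)
    fix r assume "indicator {0<..} r * ennreal (indicator {\<rho>..<\<sigma>} r) * sphere_nn_int_abs v r \<noteq> \<infinity>"
      and r: "r \<in> {\<rho>..<\<sigma>}"
    moreover have "0 < r" using r \<open>0 < \<rho>\<close> by simp
    ultimately show "sphere_nn_int_abs v r = ennreal (sphere_int_abs v r)"
      by (simp add: sphere_int_abs_eq_enn2real ennreal_enn2real_if indicator_def)
  qed
qed

lemma nn_integral_radial_weight:
  fixes v :: "'a::euclidean_space \<Rightarrow> real" and \<psi> :: "real \<Rightarrow> real"
  assumes [measurable]: "v \<in> borel_measurable borel" "\<psi> \<in> borel_measurable borel"
    and v_int: "set_integrable lebesgue (ball 0 \<sigma>) v" and "0 < \<rho>"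
    and \<psi>_nonneg: "\<And>r. 0 \<le> \<psi> r" and \<psi>_supp: "\<And>r. r \<notin> {\<rho>..<\<sigma>} \<Longrightarrow> \<psi> r = 0"
  shows "(\<integral>\<^sup>+x. ennreal (\<bar>v x\<bar> * \<psi> (norm x)) \<partial>lborel)
       = (\<integral>\<^sup>+r. ennreal (indicator {\<rho>..\<sigma>} r *\<^sub>R (\<psi> r * sphere_int_abs v r)) \<partial>lborel)"
  unfolding nn_integral_radial_weight_polar[OF assms(1,2) \<psi>_nonneg]
proof (intro nn_integral_cong_AE, use ae_sphere_nn_int_abs_eq[OF assms(1) v_int \<open>0 < \<rho>\<close>] in eventually_elim)
  fix r assume eq: "r \<in> {\<rho>..<\<sigma>} \<longrightarrow> sphere_nn_int_abs v r = ennreal (sphere_int_abs v r)"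
  show "indicator {0<..} r * ennreal (\<psi> r) * sphere_nn_int_abs v r
      = ennreal (indicator {\<rho>..\<sigma>} r *\<^sub>R (\<psi> r * sphere_int_abs v r))"
  proof (cases "r \<in> {\<rho>..<\<sigma>}")
    case True
    then have "0 < r" using \<open>0 < \<rho>\<close> by simp
    then show ?thesis
      using True eq sphere_int_abs_nonneg[OF assms(1) \<open>0 < r\<close>] \<psi>_nonneg[of r]
      by (simp add: ennreal_mult)
  qed (simp add: \<psi>_supp)
qed

lemma set_integrable_sphere_int_abs:
  fixes v :: "'a::euclidean_space \<Rightarrow> real"
  assumes [measurable]: "v \<in> borel_measurable borel"
    and v_int: "set_integrable lebesgue (ball 0 \<sigma>) v" and "0 < \<rho>"
  shows "set_integrable lborel {\<rho>..\<sigma>} (sphere_int_abs v)"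
  unfolding set_integrable_def
proof (rule integrableI_bounded)
  have "(\<integral>\<^sup>+r. ennreal (norm (indicator {\<rho>..\<sigma>} r *\<^sub>R sphere_int_abs v r)) \<partial>lborel)
      = (\<integral>\<^sup>+r. ennreal (indicator {\<rho>..\<sigma>} r *\<^sub>R (indicator {\<rho>..<\<sigma>} r * sphere_int_abs v r)) \<partial>lborel)"
    using \<open>0 < \<rho>\<close> sphere_int_abs_nonneg[OF assms(1)]
    by (intro nn_integral_cong_AE, use AE_lborel_singleton[of \<sigma>] in eventually_elim)
      (auto simp: indicator_def)
  also have "\<dots> = (\<integral>\<^sup>+x. ennreal (\<bar>v x\<bar> * indicator {\<rho>..<\<sigma>} (norm x)) \<partial>lborel)"
    by (rule nn_integral_radial_weight[OF assms(1) _ v_int \<open>0 < \<rho>\<close>, symmetric]) auto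
  also have "\<dots> < \<infinity>"
    by (rule nn_integral_shell_finite[OF assms(1) v_int])
  finally show "(\<integral>\<^sup>+r. ennreal (norm (indicator {\<rho>..\<sigma>} r *\<^sub>R sphere_int_abs v r)) \<partial>lborel) < \<infinity>" .
qed measurable

lemma set_integral_radial_weight:
  fixes v :: "'a::euclidean_space \<Rightarrow> real" and \<psi> :: "real \<Rightarrow> real"
  assumes [measurable]: "v \<in> borel_measurable borel" "\<psi> \<in> borel_measurable borel"
    and v_int: "set_integrable lebesgue (ball 0 \<sigma>) v" and "0 < \<rho>"
    and \<psi>_nonneg: "\<And>r. 0 \<le> \<psi> r" and \<psi>_supp: "\<And>r. r \<notin> {\<rho>..<\<sigma>} \<Longrightarrow> \<psi> r = 0"
  shows "(\<integral>x\<in>ball 0 \<sigma>. \<bar>v x\<bar> * \<psi> (norm x) \<partial>lebesgue) = (LINT r:{\<rho>..\<sigma>}|lborel. \<psi> r * sphere_int_abs v r)"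
proof -
  have "(\<integral>x\<in>ball 0 \<sigma>. \<bar>v x\<bar> * \<psi> (norm x) \<partial>lebesgue) = (\<integral>x. \<bar>v x\<bar> * \<psi> (norm x) \<partial>lborel)"
    unfolding set_lebesgue_integral_def using \<psi>_supp
    by (subst integral_completion)
      (measurable, auto intro!: Bochner_Integration.integral_cong simp: indicator_def)
  also have "\<dots> = enn2real (\<integral>\<^sup>+x. ennreal (\<bar>v x\<bar> * \<psi> (norm x)) \<partial>lborel)"
    using \<psi>_nonneg by (intro integral_eq_nn_integral) auto
  also have "\<dots> = enn2real (\<integral>\<^sup>+r. ennreal (indicator {\<rho>..\<sigma>} r *\<^sub>R (\<psi> r * sphere_int_abs v r)) \<partial>lborel)"
    using nn_integral_radial_weight[OF assms] by simp
  also have "\<dots> = (LINT r:{\<rho>..\<sigma>}|lborel. \<psi> r * sphere_int_abs v r)"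
    unfolding set_lebesgue_integral_def using \<open>0 < \<rho>\<close> \<psi>_nonneg sphere_int_abs_nonneg[OF assms(1)]
    by (intro integral_eq_nn_integral[symmetric]) (auto simp: indicator_def)
  finally show ?thesis .
qed

section \<open>Radial test functions\<close>

lemma grad_eqI:
  assumes "(\<eta> has_derivative (\<lambda>h. g \<bullet> h)) (at x)"
  shows "grad \<eta> x = g"
proof -
  have "(\<eta> has_derivative (\<lambda>h. grad \<eta> x \<bullet> h)) (at x)"
    unfolding grad_def by (rule someI) (rule assms)
  then have "(\<lambda>h. grad \<eta> x \<bullet> h) = (\<lambda>h. g \<bullet> h)"
    using assms has_derivative_unique by blast
  then have "(grad \<eta> x - g) \<bullet> (grad \<eta> x - g) = 0"
    by (metis inner_diff_left right_minus_eq)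
  then show ?thesis by simp
qed

context
  fixes \<phi> \<phi>' :: "real \<Rightarrow> real" and a c :: real
  assumes \<phi>_deriv: "\<And>t. (\<phi> has_real_derivative \<phi>' t) (at t)" and \<phi>'_cont: "continuous_on UNIV \<phi>'"
    and a_pos: "0 < a" and \<phi>_const: "\<And>t. t < a \<Longrightarrow> \<phi> t = c"
begin

lemma radial_profile_derivative_eq_0: "t < a \<Longrightarrow> \<phi>' t = 0"
proof -
  assume "t < a"
  have "((\<lambda>_. c) has_real_derivative 0) (at t)" by (rule DERIV_const)
  then have "(\<phi> has_real_derivative 0) (at t)"
    by (rule has_field_derivative_transform_within_open[where S="{..<a}"]) (use \<open>t < a\<close> \<phi>_const in auto)
  then show ?thesis using \<phi>_deriv DERIV_unique by blast
qed

lemma radial_has_derivative: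
  "((\<lambda>x::'a::euclidean_space. \<phi> (norm x)) has_derivative (\<lambda>h. ((\<phi>' (norm x) / norm x) *\<^sub>R x) \<bullet> h)) (at x)"
proof (cases "x = 0")
  case True
  have "((\<lambda>_. c) has_derivative (\<lambda>h. ((\<phi>' (norm x) / norm x) *\<^sub>R x) \<bullet> h)) (at x)"
    using True by simp
  then show ?thesis
    by (rule has_derivative_transform_within_open[where s="ball 0 a"]) (use True a_pos \<phi>_const in auto)
next
  case False
  have "GDERIV (\<lambda>x. \<phi> (norm x)) x :> \<phi>' (norm x) *\<^sub>R sgn x"
    by (rule GDERIV_DERIV_compose[OF GDERIV_norm[OF False] \<phi>_deriv])
  moreover have "(\<lambda>h. h \<bullet> (\<phi>' (norm x) *\<^sub>R sgn x)) = (\<lambda>h. ((\<phi>' (norm x) / norm x) *\<^sub>R x) \<bullet> h)"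
    by (simp add: sgn_div_norm inner_commute divide_inverse mult.commute)
  ultimately show ?thesis unfolding gderiv_def by simp
qed

lemma continuous_on_radial_gradient:
  "continuous_on UNIV (\<lambda>x::'a::euclidean_space. (\<phi>' (norm x) / norm x) *\<^sub>R x)"
proof (rule continuous_at_imp_continuous_on, intro ballI)
  fix x :: 'a
  show "isCont (\<lambda>x. (\<phi>' (norm x) / norm x) *\<^sub>R x) x"
  proof (cases "x = 0")
    case True
    have "\<forall>\<^sub>F y in nhds x. (\<phi>' (norm y) / norm y) *\<^sub>R y = 0"
      using eventually_nhds_in_open[of "ball 0 a" x] True a_pos radial_profile_derivative_eq_0
      by (auto elim!: eventually_mono)
    then have "isCont (\<lambda>y. (\<phi>' (norm y) / norm y) *\<^sub>R y) x \<longleftrightarrow> isCont (\<lambda>_. 0::'a) x"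
      by (rule isCont_cong)
    then show ?thesis by simp
  next
    case False
    have "continuous_on UNIV (\<lambda>y::'a. \<phi>' (norm y))"
      by (rule continuous_on_compose2[OF \<phi>'_cont]) (auto intro: continuous_intros)
    then have "isCont (\<lambda>y. \<phi>' (norm y)) x"
      by (simp add: continuous_on_eq_continuous_at)
    then show ?thesis using False by (intro continuous_intros) auto
  qed
qed

lemma norm_grad_radial: "norm (grad (\<lambda>x::'a::euclidean_space. \<phi> (norm x)) x) = \<bar>\<phi>' (norm x)\<bar>"
proof -
  have "grad (\<lambda>x::'a. \<phi> (norm x)) x = (\<phi>' (norm x) / norm x) *\<^sub>R x"
    by (rule grad_eqI[OF radial_has_derivative])
  then show ?thesis using radial_profile_derivative_eq_0[of 0] a_pos by (cases "x = 0") simp_all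
qed

lemma radial_in_C1_0:
  assumes "\<And>t. b < t \<Longrightarrow> \<phi> t = 0" "b < \<sigma>"
  shows "(\<lambda>x::'a::euclidean_space. \<phi> (norm x)) \<in> C1_0 (ball 0 \<sigma>)"
proof -
  have supp: "{x::'a. \<phi> (norm x) \<noteq> 0} \<subseteq> cball 0 b"
    using assms(1) by (force simp: not_less)
  then have "compact (closure {x::'a. \<phi> (norm x) \<noteq> 0})"
    by (meson bounded_cball bounded_subset compact_closure)
  moreover have "closure {x::'a. \<phi> (norm x) \<noteq> 0} \<subseteq> ball 0 \<sigma>"
    using closure_minimal[OF supp] \<open>b < \<sigma>\<close> by (auto simp: subset_iff)
  moreover have "\<exists>g. (\<forall>x. ((\<lambda>x::'a. \<phi> (norm x)) has_derivative (\<lambda>h. g x \<bullet> h)) (at x))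
      \<and> continuous_on UNIV g"
    by (intro exI[of _ "\<lambda>x::'a. (\<phi>' (norm x) / norm x) *\<^sub>R x"] conjI allI
        radial_has_derivative continuous_on_radial_gradient)
  ultimately show ?thesis unfolding C1_0_def by blast
qed

end

context
  fixes k :: "real \<Rightarrow> real" and a b \<rho> \<sigma> :: real
  assumes k_cont: "continuous_on UNIV k" and k_nonneg: "\<And>t. 0 \<le> k t"
    and k_supp: "\<And>t. t \<notin> {a..b} \<Longrightarrow> k t = 0" and bounds: "\<rho> < a" "a \<le> b" "b < \<sigma>"
begin

lemma integrable_on_bump: "k integrable_on {p..q}"
  by (rule integrable_continuous_real) (rule continuous_on_subset[OF k_cont], simp)

lemma integral_bump_eq_0: "(\<And>t. t \<in> {p..q} \<Longrightarrow> t \<notin> {a..b}) \<Longrightarrow> integral {p..q} k = 0"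
  using integral_cong[of "{p..q}" k "\<lambda>_. 0"] k_supp by simp

lemma integral_bump_combine: "\<rho> \<le> p \<Longrightarrow> p \<le> q \<Longrightarrow> integral {\<rho>..p} k + integral {p..q} k = integral {\<rho>..q} k"
  using integrable_on_bump by (intro Henstock_Kurzweil_Integration.integral_combine) auto

lemma integral_bump_below: "t < a \<Longrightarrow> integral {\<rho>..t} k = 0"
  by (intro integral_bump_eq_0) auto

lemma integral_bump_above: "b < t \<Longrightarrow> integral {\<rho>..t} k = integral {\<rho>..\<sigma>} k"
  using integral_bump_combine[of \<sigma> t] integral_bump_eq_0[of \<sigma> t]
    integral_bump_combine[of t \<sigma>] integral_bump_eq_0[of t \<sigma>] bounds
  by (cases "\<sigma> \<le> t") auto

lemma integral_bump_le: "integral {\<rho>..t} k \<le> integral {\<rho>..\<sigma>} k"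
proof (cases "a \<le> t \<and> t \<le> b")
  case True
  moreover have "0 \<le> integral {t..\<sigma>} k"
    using integrable_on_bump k_nonneg by (intro integral_nonneg) auto
  ultimately show ?thesis using integral_bump_combine[of t \<sigma>] bounds by auto
next
  case False
  then show ?thesis
    using integral_bump_below integral_bump_above integral_nonneg[OF integrable_on_bump k_nonneg, of \<rho> \<sigma>]
    by force
qed

lemma has_real_derivative_integral_bump: "((\<lambda>t. integral {\<rho>..t} k) has_real_derivative k t) (at t)"
proof (cases "t < a")
  case True
  have "((\<lambda>_. 0) has_real_derivative k t) (at t)"
    using k_supp[of t] True by simp
  then show ?thesis
    by (rule has_field_derivative_transform_within_open[where S="{..<a}"])
      (use True integral_bump_below in auto)
next
  case False
  then have "\<rho> < t" using bounds by simp
  have "((\<lambda>u. integral {\<rho>..u} k) has_vector_derivative k t) (at t within {\<rho>..t + 1})"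
    using \<open>\<rho> < t\<close> by (intro integral_has_vector_derivative continuous_on_subset[OF k_cont]) auto
  then show ?thesis
    using at_within_Icc_at[of \<rho> t "t + 1"] \<open>\<rho> < t\<close> by (simp add: has_real_derivative_iff_has_vector_derivative)
qed

end

lemma radial_test_function:
  fixes k :: "real \<Rightarrow> real"
  assumes "0 < \<rho>" and bump: "bump_on \<rho> \<sigma> k" and c_pos: "0 < integral {\<rho>..\<sigma>} k"
  obtains \<eta> :: "'a::euclidean_space \<Rightarrow> real"
  where "\<eta> \<in> C1_0 (ball 0 \<sigma>)" "\<And>x. 0 \<le> \<eta> x" "\<And>x. x \<in> ball 0 \<rho> \<Longrightarrow> \<eta> x = 1"
    "\<And>x. norm (grad \<eta> x) = k (norm x) / integral {\<rho>..\<sigma>} k"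
proof -
  define c where "c = integral {\<rho>..\<sigma>} k"
  obtain a b where k_cont: "continuous_on UNIV k" and k_nonneg: "\<And>t. 0 \<le> k t"
    and k_supp: "\<And>t. t \<notin> {a..b} \<Longrightarrow> k t = 0" and "\<rho> < a" "b < \<sigma>"
    using bump unfolding bump_on_def by blast
  have "a \<le> b"
  proof (rule ccontr)
    assume "\<not> a \<le> b"
    then have "k = (\<lambda>_. 0)" using k_supp by fastforce
    then show False using c_pos by simp
  qed
  note bump_facts = k_cont k_nonneg k_supp \<open>\<rho> < a\<close> \<open>a \<le> b\<close> \<open>b < \<sigma>\<close>
  define \<phi> \<phi>' where "\<phi> t = 1 - integral {\<rho>..t} k / c" and "\<phi>' t = - k t / c" for t
  have \<phi>_deriv: "(\<phi> has_real_derivative \<phi>' t) (at t)" for t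
    using DERIV_diff[OF DERIV_const DERIV_cdivide[OF has_real_derivative_integral_bump[OF bump_facts]]]
    by (simp add: \<phi>_def[abs_def] \<phi>'_def)
  have \<phi>'_cont: "continuous_on UNIV \<phi>'"
    unfolding \<phi>'_def[abs_def] using k_cont c_pos by (intro continuous_intros) (auto simp: c_def)
  have \<phi>_1: "\<phi> t = 1" if "t < a" for t
    using integral_bump_below[OF bump_facts that] by (simp add: \<phi>_def)
  have \<phi>_0: "\<phi> t = 0" if "b < t" for t
    using integral_bump_above[OF bump_facts that] c_pos by (simp add: \<phi>_def c_def)
  have "0 < a" using \<open>0 < \<rho>\<close> \<open>\<rho> < a\<close> by simp
  note radial = radial_in_C1_0[OF \<phi>_deriv \<phi>'_cont \<open>0 < a\<close> \<phi>_1 \<phi>_0 \<open>b < \<sigma>\<close>]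
    norm_grad_radial[OF \<phi>_deriv \<phi>'_cont \<open>0 < a\<close> \<phi>_1]
  show ?thesis
  proof
    show "(\<lambda>x::'a. \<phi> (norm x)) \<in> C1_0 (ball 0 \<sigma>)" by (rule radial(1))
    show "0 \<le> \<phi> (norm x)" for x :: 'a
      using integral_bump_le[OF bump_facts] c_pos by (simp add: \<phi>_def c_def divide_le_eq_1)
    show "\<phi> (norm x) = 1" if "x \<in> ball 0 \<rho>" for x :: 'a
      using \<phi>_1 that \<open>\<rho> < a\<close> by simp
    show "norm (grad (\<lambda>x::'a. \<phi> (norm x)) x) = k (norm x) / integral {\<rho>..\<sigma>} k" for x
      using radial(2)[of x] k_nonneg[of "norm x"] c_pos by (simp add: \<phi>'_def c_def)
  qed
qed

lemma J_le_energy: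
  fixes v \<eta> :: "'a::euclidean_space \<Rightarrow> real"
  assumes "\<eta> \<in> C1_0 (ball 0 \<sigma>)" "\<And>x. 0 \<le> \<eta> x" "\<And>x. x \<in> ball 0 \<rho> \<Longrightarrow> \<eta> x = 1"
  shows "J \<rho> \<sigma> v \<le> (\<integral>x\<in>ball 0 \<sigma>. \<bar>v x\<bar> * (norm (grad \<eta> x))\<^sup>2 \<partial>lebesgue)"
  unfolding J_def
proof (rule cInf_lower)
  show "bdd_below {(\<integral>x\<in>ball 0 \<sigma>. \<bar>v x\<bar> * (norm (grad \<eta> x))\<^sup>2 \<partial>lebesgue) | \<eta>.
      \<eta> \<in> C1_0 (ball 0 \<sigma>) \<and> (\<forall>x. \<eta> x \<ge> 0) \<and> (\<forall>x\<in>ball 0 \<rho>. \<eta> x = 1)}"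
    by (rule bdd_belowI[of _ 0]) (auto simp: set_lebesgue_integral_def intro!: integral_nonneg_AE)
qed (use assms in blast)

lemma J_le_bump_quotient:
  fixes v :: "'a::euclidean_space \<Rightarrow> real" and k :: "real \<Rightarrow> real"
  assumes "0 < \<rho>" "\<rho> < \<sigma>" and v_meas: "v \<in> borel_measurable borel"
    and v_int: "set_integrable lebesgue (ball 0 \<sigma>) v"
    and bump: "bump_on \<rho> \<sigma> k" and pos: "0 < (LINT x:{\<rho>..\<sigma>}|lborel. k x)"
  shows "J \<rho> \<sigma> v \<le> (LINT r:{\<rho>..\<sigma>}|lborel. (k r)\<^sup>2 * sphere_int_abs v r) / (LINT r:{\<rho>..\<sigma>}|lborel. k r)\<^sup>2"
proof -
  define c where "c = (LINT r:{\<rho>..\<sigma>}|lborel. k r)"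
  obtain a b where k_cont: "continuous_on UNIV k" and k_nonneg: "\<And>t. 0 \<le> k t"
    and k_supp: "\<And>t. t \<notin> {a..b} \<Longrightarrow> k t = 0" and "\<rho> < a" "b < \<sigma>"
    using bump unfolding bump_on_def by blast
  have "c = integral {\<rho>..\<sigma>} k"
    unfolding c_def using continuous_on_subset[OF k_cont]
    by (intro set_borel_integral_eq_integral(2) borel_integrable_atLeastAtMost') auto
  then obtain \<eta> :: "'a \<Rightarrow> real"
    where \<eta>: "\<eta> \<in> C1_0 (ball 0 \<sigma>)" "\<And>x. 0 \<le> \<eta> x" "\<And>x. x \<in> ball 0 \<rho> \<Longrightarrow> \<eta> x = 1"
    and grad_\<eta>: "\<And>x. norm (grad \<eta> x) = k (norm x) / c"
    using radial_test_function[OF \<open>0 < \<rho>\<close> bump] pos c_def by metis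
  have "J \<rho> \<sigma> v \<le> (\<integral>x\<in>ball 0 \<sigma>. \<bar>v x\<bar> * (norm (grad \<eta> x))\<^sup>2 \<partial>lebesgue)"
    by (rule J_le_energy[OF \<eta>])
  also have "\<dots> = (\<integral>x\<in>ball 0 \<sigma>. \<bar>v x\<bar> * (k (norm x) / c)\<^sup>2 \<partial>lebesgue)"
    by (simp add: grad_\<eta>)
  also have "\<dots> = (LINT r:{\<rho>..\<sigma>}|lborel. (k r / c)\<^sup>2 * sphere_int_abs v r)"
  proof (rule set_integral_radial_weight[OF v_meas _ v_int \<open>0 < \<rho>\<close>])
    show "(\<lambda>r. (k r / c)\<^sup>2) \<in> borel_measurable borel"
      using borel_measurable_continuous_onI[OF k_cont] by measurable
    show "(k r / c)\<^sup>2 = 0" if "r \<notin> {\<rho>..<\<sigma>}" for r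
      using k_supp[of r] that \<open>\<rho> < a\<close> \<open>b < \<sigma>\<close> by auto
  qed simp
  also have "\<dots> = (LINT r:{\<rho>..\<sigma>}|lborel. (k r)\<^sup>2 * sphere_int_abs v r) / c\<^sup>2"
    by (simp add: power_divide)
  finally show ?thesis unfolding c_def .
qed

theorem mainTheorem4:
  fixes v :: "'a::euclidean_space \<Rightarrow> real" and \<rho> \<sigma> \<delta> :: real
  assumes "DIM('a) \<ge> 2"
    and "0 < \<rho>" and "\<rho> < \<sigma>"
    and "v \<in> borel_measurable borel"
    and "set_integrable lebesgue (ball 0 \<sigma>) v"
    and "0 < \<delta>" and "\<delta> \<le> 1"
  shows "J \<rho> \<sigma> v \<le> (\<sigma> - \<rho>) powr (-(1 + 1/\<delta>)) *
           (\<integral>r\<in>{\<rho>..\<sigma>}. (sphere_int_abs v r) powr \<delta> \<partial>lborel) powr (1/\<delta>)"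
proof (rule le_powr_integral_if_le_bump_quotients)
  show "sphere_int_abs v \<in> borel_measurable borel"
    using assms(4) by measurable
  show "0 \<le> sphere_int_abs v r" if "r \<in> {\<rho>..\<sigma>}" for r
    using that assms(2,4) by (intro sphere_int_abs_nonneg) auto
  show "set_integrable lborel {\<rho>..\<sigma>} (sphere_int_abs v)"
    by (rule set_integrable_sphere_int_abs[OF assms(4,5,2)])
  show "J \<rho> \<sigma> v \<le> (LINT r:{\<rho>..\<sigma>}|lborel. (k r)\<^sup>2 * sphere_int_abs v r) / (LINT r:{\<rho>..\<sigma>}|lborel. k r)\<^sup>2"
    if "bump_on \<rho> \<sigma> k" "0 < (LINT r:{\<rho>..\<sigma>}|lborel. k r)" for k
    using J_le_bump_quotient[OF assms(2-5) that] .
qed (use assms in auto)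

end
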